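(* Let $k\equiv\pm1,\pm3\pmod{10}$. Then $\operatorname{Ker}\nu_{G^k}=\{M=\begin{pmatrix} a&b\\ c&d\end{pmatrix}\in\Gamma_{\theta,5}: b,c\in5\mathbb{Z}\text{ and }\tfrac b5\equiv\tfrac c5\pmod5\}$; in particular $\operatorname{Ker}\nu_{G^k}=\operatorname{Ker}\nu_{F^k}$.
   Context: $\Gamma_{\theta,5}=\{M\in SL(2,\mathbb{Z}): M\equiv\pm\begin{pmatrix}1&0\\0&1\end{pmatrix}\text{ or }\pm\begin{pmatrix}0&-1\\1&0\end{pmatrix}\pmod 5\}$. For $M=\begin{pmatrix} a&b\\ c&d\end{pmatrix}\in\Gamma_{\theta,5}$ define $g(M)=\frac{6b}{5}+\frac{2ab}{5}+\frac{2cd}{5}$ if $M\equiv I$, $\frac{24b}{5}+\frac{2ab}{5}+\frac{2cd}{5}$ if $M\equiv -I$, $5+\frac{6d}{5}+\frac{2ab}{5}+\frac{2cd}{5}$ if $M\equiv\begin{pmatrix}0&-1\\1&0\end{pmatrix}$, $5-\frac{6d}{5}+\frac{2ab}{5}+\frac{2cd}{5}$ if $M\equiv\begin{pmatrix}0&1\\-1&0\end{pmatrix}$ (all mod 5), and $f(M)$ by the same case split with values $\frac{4b}{5}+\frac{8ab}{5}+\frac{8cd}{5}$, $\frac{6b}{5}+\frac{8ab}{5}+\frac{8cd}{5}$, $5+\frac{4d}{5}+\frac{8ab}{5}+\frac{8cd}{5}$, $5-\frac{4d}{5}+\frac{8ab}{5}+\frac{8cd}{5}$ respectively. For $k\in\mathbb{Z}$,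 $\nu_{G^k}(M)=\exp(\frac{\pi ik}{5}g(M))$ and $\nu_{F^k}(M)=\exp(\frac{\pi ik}{5}f(M))$; these are the multiplier systems (weight $2k$) of $G^k$ and $F^k$, where $G=\eta^6/\big(\theta\begin{bmatrix}3/5\\3/5\end{bmatrix}\theta\begin{bmatrix}3/5\\7/5\end{bmatrix}\big)$, $F=\eta^6/\big(\theta\begin{bmatrix}1/5\\1/5\end{bmatrix}\theta\begin{bmatrix}1/5\\9/5\end{bmatrix}\big)$, with theta constants $\theta\begin{bmatrix}\epsilon\\ \epsilon'\end{bmatrix}=\sum_{n\in\mathbb{Z}}\exp(2\pi i[\frac12(n+\frac\epsilon2)^2\tau+(n+\frac\epsilon2)\frac{\epsilon'}2])$ and $\eta(\tau)=q^{1/24}\prod_{n\ge1}(1-q^n)$. Kernels are $\{M\in\Gamma_{\theta,5}:\nu(M)=1\}$. *)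

theory Defs
  imports Complex_Main "HOL-Number_Theory.Cong"
begin

text \<open>A matrix (a b; c d) in SL(2,Z) is represented by the quadruple (a,b,c,d).\<close>
type_synonym mat2 = "int \<times> int \<times> int \<times> int"

definition SL2Z :: "mat2 set" where
  "SL2Z = {(a,b,c,d). a*d - b*c = 1}"

definition cong_I :: "mat2 \<Rightarrow> bool" where
  "cong_I M = (case M of (a,b,c,d) \<Rightarrow>
     [a = 1] (mod 5) \<and> [b = 0] (mod 5) \<and> [c = 0] (mod 5) \<and> [d = 1] (mod 5))"
definition cong_mI :: "mat2 \<Rightarrow> bool" where
  "cong_mI M = (case M of (a,b,c,d) \<Rightarrow>
     [a = -1] (mod 5) \<and> [b = 0] (mod 5) \<and> [c = 0] (mod 5) \<and> [d = -1] (mod 5))"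
definition cong_S :: "mat2 \<Rightarrow> bool" where
  "cong_S M = (case M of (a,b,c,d) \<Rightarrow>
     [a = 0] (mod 5) \<and> [b = -1] (mod 5) \<and> [c = 1] (mod 5) \<and> [d = 0] (mod 5))"
definition cong_mS :: "mat2 \<Rightarrow> bool" where
  "cong_mS M = (case M of (a,b,c,d) \<Rightarrow>
     [a = 0] (mod 5) \<and> [b = 1] (mod 5) \<and> [c = -1] (mod 5) \<and> [d = 0] (mod 5))"

definition Gamma_theta5 :: "mat2 set" where
  "Gamma_theta5 = {M \<in> SL2Z. cong_I M \<or> cong_mI M \<or> cong_S M \<or> cong_mS M}"

definition g_fun :: "mat2 \<Rightarrow> real" where
  "g_fun M = (case M of (a,b,c,d) \<Rightarrow>
     (if cong_I M then 6*b/5 + 2*a*b/5 + 2*c*d/5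
      else if cong_mI M then 24*b/5 + 2*a*b/5 + 2*c*d/5
      else if cong_S M then 5 + 6*d/5 + 2*a*b/5 + 2*c*d/5
      else 5 - 6*d/5 + 2*a*b/5 + 2*c*d/5))"

definition f_fun :: "mat2 \<Rightarrow> real" where
  "f_fun M = (case M of (a,b,c,d) \<Rightarrow>
     (if cong_I M then 4*b/5 + 8*a*b/5 + 8*c*d/5
      else if cong_mI M then 6*b/5 + 8*a*b/5 + 8*c*d/5
      else if cong_S M then 5 + 4*d/5 + 8*a*b/5 + 8*c*d/5
      else 5 - 4*d/5 + 8*a*b/5 + 8*c*d/5))"

definition nu_G :: "int \<Rightarrow> mat2 \<Rightarrow> complex" where
  "nu_G k M = exp (\<i> * complex_of_real (pi * real_of_int k / 5 * g_fun M))"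

definition nu_F :: "int \<Rightarrow> mat2 \<Rightarrow> complex" where
  "nu_F k M = exp (\<i> * complex_of_real (pi * real_of_int k / 5 * f_fun M))"

definition ker_nu :: "(mat2 \<Rightarrow> complex) \<Rightarrow> mat2 set" where
  "ker_nu \<nu> = {M \<in> Gamma_theta5. \<nu> M = 1}"

end

theory Submission
  imports Defs "HOL-Analysis.Complex_Transcendental"
begin

text \<open>Both g and f take values in (1/5)Z, so nu(M) = exp(pi i k N / 25) with the integer
  N = 5 g(M) (resp. N = 5 f(M)); hence nu(M) = 1 iff 50 divides k N, i.e. iff 50 divides N,
  because k is prime to 10. For M congruent to +-S the numerator N is odd. For M congruent
  to +-I write b = 5 b', c = 5 c': then N is congruent to +-10 (c' - b') modulo 50, for g as
  well as for f, so 50 divides N iff b' = c' (mod 5).\<close>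

lemma exp_pi_div_eq_1_iff:
  fixes n m :: int
  assumes "m \<noteq> 0"
  shows "exp (\<i> * complex_of_real (pi * of_int n / of_int m)) = 1 \<longleftrightarrow> 2 * m dvd n"
proof -
  have "pi * of_int n / of_int m = of_int (2 * j) * pi \<longleftrightarrow> n = 2 * m * j" for j :: int
  proof -
    have "pi * of_int n / of_int m = of_int (2 * j) * pi \<longleftrightarrow> of_int n = real_of_int (2 * m * j)"
      using assms by (auto simp: field_simps)
    then show ?thesis
      by (simp only: of_int_eq_iff)
  qed
  then show ?thesis
    by (auto simp: exp_eq_1 dvd_def)
qed

lemma coprime_50_if_mod_10:
  fixes k :: int
  assumes "k mod 10 \<in> {1, 3, 7, 9}"
  shows "coprime 50 k"
proof -
  have "\<not> 2 dvd k" "\<not> 5 dvd k"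
    using assms by (auto, presburger+)
  then have "coprime 2 k" "coprime 5 k"
    by (simp_all add: prime_imp_coprime)
  then have "coprime (2 * (5 * 5)) k"
    by (simp only: coprime_mult_left_iff)
  then show ?thesis
    by simp
qed

lemma exp_pi_mult_div_25_eq_1_iff:
  fixes k N :: int
  assumes "coprime 50 k"
  shows "exp (\<i> * complex_of_real (pi * of_int k / 5 * (of_int N / 5))) = 1 \<longleftrightarrow> 50 dvd N"
proof -
  have "pi * of_int k / 5 * (of_int N / 5) = pi * of_int (k * N) / of_int 25"
    by simp
  then have "exp (\<i> * complex_of_real (pi * of_int k / 5 * (of_int N / 5))) = 1 \<longleftrightarrow> 2 * 25 dvd k * N"
    by (simp only: exp_pi_div_eq_1_iff zero_neq_numeral not_False_eq_True)
  then show ?thesis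
    using assms by (simp add: coprime_dvd_mult_right_iff)
qed

definition g_num :: "mat2 \<Rightarrow> int" where
  "g_num M = (case M of (a,b,c,d) \<Rightarrow>
     (if cong_I M then 6*b + 2*a*b + 2*c*d
      else if cong_mI M then 24*b + 2*a*b + 2*c*d
      else if cong_S M then 25 + 6*d + 2*a*b + 2*c*d
      else 25 - 6*d + 2*a*b + 2*c*d))"

definition f_num :: "mat2 \<Rightarrow> int" where
  "f_num M = (case M of (a,b,c,d) \<Rightarrow>
     (if cong_I M then 4*b + 8*a*b + 8*c*d
      else if cong_mI M then 6*b + 8*a*b + 8*c*d
      else if cong_S M then 25 + 4*d + 8*a*b + 8*c*d
      else 25 - 4*d + 8*a*b + 8*c*d))"

lemma g_fun_eq: "g_fun M = of_int (g_num M) / 5"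
  by (cases M) (auto simp: g_fun_def g_num_def field_simps)

lemma f_fun_eq: "f_fun M = of_int (f_num M) / 5"
  by (cases M) (auto simp: f_fun_def f_num_def field_simps)

lemma nu_G_eq_1_iff:
  assumes "coprime 50 k"
  shows "nu_G k M = 1 \<longleftrightarrow> 50 dvd g_num M"
  unfolding nu_G_def g_fun_eq using exp_pi_mult_div_25_eq_1_iff[OF assms] by simp

lemma nu_F_eq_1_iff:
  assumes "coprime 50 k"
  shows "nu_F k M = 1 \<longleftrightarrow> 50 dvd f_num M"
  unfolding nu_F_def f_fun_eq using exp_pi_mult_div_25_eq_1_iff[OF assms] by simp

lemma cong_modE:
  fixes x e m :: int
  assumes "[x = e] (mod m)"
  obtains x' where "x = m * x' + e"
  using assms by (metis cong_iff_lin cong_sym add.commute)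

lemma g_f_num_cong_I:
  assumes "cong_I (a, b, c, d)"
  shows "[g_num (a, b, c, d) = 10 * (c div 5 - b div 5)] (mod 50)"
    and "[f_num (a, b, c, d) = 10 * (b div 5 - c div 5)] (mod 50)"
proof -
  obtain a' b' c' d' where a: "a = 5 * a' + 1" and b: "b = 5 * b' + 0"
    and c: "c = 5 * c' + 0" and d: "d = 5 * d' + 1"
    using assms unfolding cong_I_def by (auto elim!: cong_modE)
  have "g_num (a, b, c, d) - 10 * (c div 5 - b div 5) = 50 * (b' + a' * b' + c' * d')"
    using assms by (simp add: g_num_def a b c d algebra_simps)
  then show "[g_num (a, b, c, d) = 10 * (c div 5 - b div 5)] (mod 50)"
    by (simp add: cong_iff_dvd_diff)
  have "f_num (a, b, c, d) - 10 * (b div 5 - c div 5) = 50 * (b' + c' + 4 * a' * b' + 4 * c' * d')"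
    using assms by (simp add: f_num_def a b c d algebra_simps)
  then show "[f_num (a, b, c, d) = 10 * (b div 5 - c div 5)] (mod 50)"
    by (simp add: cong_iff_dvd_diff)
qed

lemma g_f_num_cong_mI:
  assumes "cong_mI (a, b, c, d)"
  shows "[g_num (a, b, c, d) = 10 * (b div 5 - c div 5)] (mod 50)"
    and "[f_num (a, b, c, d) = 10 * (c div 5 - b div 5)] (mod 50)"
proof -
  obtain a' b' c' d' where a: "a = 5 * a' + (- 1)" and b: "b = 5 * b' + 0"
    and c: "c = 5 * c' + 0" and d: "d = 5 * d' + (- 1)"
    using assms unfolding cong_mI_def by (auto elim!: cong_modE)
  have "\<not> cong_I (a, b, c, d)"
    using assms by (auto simp: cong_I_def cong_mI_def cong_def)
  then have "g_num (a, b, c, d) - 10 * (b div 5 - c div 5) = 50 * (2 * b' + a' * b' + c' * d')"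
    using assms by (simp add: g_num_def a b c d algebra_simps)
  then show "[g_num (a, b, c, d) = 10 * (b div 5 - c div 5)] (mod 50)"
    by (simp add: cong_iff_dvd_diff)
  have "f_num (a, b, c, d) - 10 * (c div 5 - b div 5) = 50 * (4 * a' * b' + 4 * c' * d' - c')"
    using \<open>\<not> cong_I (a, b, c, d)\<close> assms by (simp add: f_num_def a b c d algebra_simps)
  then show "[f_num (a, b, c, d) = 10 * (c div 5 - b div 5)] (mod 50)"
    by (simp add: cong_iff_dvd_diff)
qed

lemma odd_g_f_num_if_not_scalar:
  assumes "\<not> cong_I M" "\<not> cong_mI M"
  shows "odd (g_num M)" and "odd (f_num M)"
  using assms by (cases M; simp add: g_num_def f_num_def)+

lemma dvd_50_iff_if_cong_10:
  fixes N y :: int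
  assumes "[N = 10 * y] (mod 50)"
  shows "50 dvd N \<longleftrightarrow> 5 dvd y"
proof -
  have "50 dvd N \<longleftrightarrow> 10 * 5 dvd 10 * y"
    using cong_dvd_iff[OF assms] by simp
  also have "\<dots> \<longleftrightarrow> 5 dvd y"
    by (rule dvd_mult_cancel_left[THEN trans]) simp
  finally show ?thesis .
qed

lemma dvd_50_g_f_num_iff:
  assumes "(a, b, c, d) \<in> Gamma_theta5"
  defines "P \<equiv> 5 dvd b \<and> 5 dvd c \<and> [b div 5 = c div 5] (mod 5)"
  shows "50 dvd g_num (a, b, c, d) \<longleftrightarrow> P" and "50 dvd f_num (a, b, c, d) \<longleftrightarrow> P"
proof -
  have "cong_I (a, b, c, d) \<or> cong_mI (a, b, c, d) \<or> cong_S (a, b, c, d) \<or> cong_mS (a, b, c, d)"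
    using assms by (simp add: Gamma_theta5_def)
  then consider "cong_I (a, b, c, d) \<or> cong_mI (a, b, c, d)"
    | "\<not> cong_I (a, b, c, d)" "\<not> cong_mI (a, b, c, d)" "cong_S (a, b, c, d) \<or> cong_mS (a, b, c, d)"
    by blast
  then have "(50 dvd g_num (a, b, c, d) \<longleftrightarrow> P) \<and> (50 dvd f_num (a, b, c, d) \<longleftrightarrow> P)"
  proof cases
    case 1
    then have "5 dvd b" "5 dvd c"
      by (auto simp: cong_I_def cong_mI_def cong_0_iff)
    moreover have "5 dvd (c div 5 - b div 5) \<longleftrightarrow> [b div 5 = c div 5] (mod 5)"
      by (simp add: cong_iff_dvd_diff dvd_diff_commute)
    moreover have "5 dvd (b div 5 - c div 5) \<longleftrightarrow> [b div 5 = c div 5] (mod 5)"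
      by (simp add: cong_iff_dvd_diff)
    ultimately show ?thesis
      using 1 g_f_num_cong_I g_f_num_cong_mI unfolding P_def by (metis dvd_50_iff_if_cong_10)
  next
    case 2
    then have "\<not> 5 dvd b"
      by (auto simp: cong_S_def cong_mS_def cong_def dvd_eq_mod_eq_0)
    moreover have "\<not> 50 dvd N" if "odd N" for N :: int
      using that dvd_trans[of 2 50 N] by auto
    ultimately show ?thesis
      using 2 odd_g_f_num_if_not_scalar unfolding P_def by blast
  qed
  then show "50 dvd g_num (a, b, c, d) \<longleftrightarrow> P" and "50 dvd f_num (a, b, c, d) \<longleftrightarrow> P"
    by blast+
qed

theorem mainTheorem11:
  fixes k :: int
  assumes "k mod 10 \<in> {1, 3, 7, 9}"
  shows "ker_nu (nu_G k) =
           {(a,b,c,d) \<in> Gamma_theta5. 5 dvd b \<and> 5 dvd c \<and> [b div 5 = c div 5] (mod 5)}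
         \<and> ker_nu (nu_G k) = ker_nu (nu_F k)"
proof -
  have k: "coprime 50 k"
    using assms by (rule coprime_50_if_mod_10)
  have G: "ker_nu (nu_G k) =
           {(a,b,c,d) \<in> Gamma_theta5. 5 dvd b \<and> 5 dvd c \<and> [b div 5 = c div 5] (mod 5)}"
    unfolding ker_nu_def nu_G_eq_1_iff[OF k] using dvd_50_g_f_num_iff(1) by auto
  have F: "ker_nu (nu_F k) =
           {(a,b,c,d) \<in> Gamma_theta5. 5 dvd b \<and> 5 dvd c \<and> [b div 5 = c div 5] (mod 5)}"
    unfolding ker_nu_def nu_F_eq_1_iff[OF k] using dvd_50_g_f_num_iff(2) by auto
  show ?thesis
    using G F by simp
qed

end
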